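(* Let $n\ge3$ be odd, $n_1=(n+1)/2$, and let $\widehat Z=\mathrm{diag}(\widehat Z_1,\dots,\widehat Z_d)$ with $\widehat Z_i\in\mathbb C^{n_1\times n_1}$ satisfy $\max_{p\in[n_1]}\frac1d\sum_{i=1}^d\|e_p^{\mathsf T}\widehat Z_i\|_2^2\le B$. Then $$\frac1d\sum_{i=1}^d\sum_{k=1}^n\frac1{w_k}\big|\langle\widehat Z_i,G_k\rangle\big|^2\le C\,B\log(n_1)$$ for an absolute constant $C>0$.
   Context: For $a\in[n]$, $w_a=\#\{(j,k)\in[n_1]\times[n_1]:j+k=a+1\}$ and $G_a=w_a^{-1/2}\sum_{j+k=a+1}e_je_k^{\mathsf T}\in\mathbb R^{n_1\times n_1}$. Inner product $\langle A,B\rangle=\mathrm{tr}(AB^{\mathsf H})$. *)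

theory Defs
  imports "HOL-Analysis.Analysis"
begin

text \<open>Matrices in C^{n1 x n1} are represented as functions nat => nat => complex,
  with row/column indices 0..n1-1 (0-based; the paper's e_j with j in [n1] is index j-1).
  Hankel index a ranges over [n] = {1..n}. In 1-based indices the condition is j+k = a+1,
  which in 0-based indices reads j+k+1 = a.\<close>

definition hankel_w :: "nat \<Rightarrow> nat \<Rightarrow> nat" where
  "hankel_w n1 a = card {(j,k). j < n1 \<and> k < n1 \<and> j + k + 1 = a}"

definition hankel_G :: "nat \<Rightarrow> nat \<Rightarrow> nat \<Rightarrow> nat \<Rightarrow> complex" where
  "hankel_G n1 a j k =
     (if j < n1 \<and> k < n1 \<and> j + k + 1 = a
      then complex_of_real (1 / sqrt (real (hankel_w n1 a))) else 0)"

definition mat_inner :: "nat \<Rightarrow> (nat \<Rightarrow> nat \<Rightarrow> complex) \<Rightarrow> (nat \<Rightarrow> nat \<Rightarrow> complex) \<Rightarrow> complex" where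
  "mat_inner n1 A B = (\<Sum>j<n1. \<Sum>k<n1. A j k * cnj (B j k))"

definition row_norm2 :: "nat \<Rightarrow> (nat \<Rightarrow> nat \<Rightarrow> complex) \<Rightarrow> nat \<Rightarrow> real" where
  "row_norm2 n1 A p = (\<Sum>k<n1. (cmod (A p k))^2)"

end

theory Submission
  imports Defs
begin

text \<open>The Hankel weight of the cell (j,l) is the length w of its antidiagonal, and
  Cauchy--Schwarz gives (1/w)|<Z,G_(j+l+1)>|^2 \<le> (1/w^2) w \<Sum>|Z_jl|^2 over that antidiagonal.
  An antidiagonal through row j has length at least min (j+1) (n1-j), so summing over all
  antidiagonals bounds the left side by \<Sum>_j (1/(j+1) + 1/(n1-j)) times the mean squared norm
  of row j, i.e. by 2 B H(n1) \<le> 2 B (1 + ln n1).\<close>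

definition antidiag :: "nat \<Rightarrow> nat \<Rightarrow> (nat \<times> nat) set" where
  "antidiag n1 a = {(j,k). j < n1 \<and> k < n1 \<and> j + k + 1 = a}"

lemma antidiag_subset_square: "antidiag n1 a \<subseteq> {..<n1} \<times> {..<n1}"
  by (auto simp: antidiag_def)

lemma antidiag_eq_filter: "antidiag n1 a = {p \<in> {..<n1} \<times> {..<n1}. a = fst p + snd p + 1}"
  by (auto simp: antidiag_def)

lemma finite_antidiag [simp]: "finite (antidiag n1 a)"
  by (rule finite_subset[OF antidiag_subset_square]) simp

lemma hankel_w_eq_card_antidiag: "hankel_w n1 a = card (antidiag n1 a)"
  by (simp add: hankel_w_def antidiag_def)

lemma hankel_w_ge_min:
  assumes "j < n1" "l < n1"
  shows "min (j + 1) (n1 - j) \<le> hankel_w n1 (j + l + 1)"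
proof -
  define a where "a = j + l + 1"
  have inj: "inj_on (\<lambda>t. (t, a - 1 - t)) X" for X
    by (auto simp: inj_on_def)
  have card_le: "card T \<le> hankel_w n1 a"
    if "\<forall>t\<in>T. t < n1 \<and> a - 1 - t < n1 \<and> t < a" "finite T" for T
  proof -
    have "(\<lambda>t. (t, a - 1 - t)) ` T \<subseteq> antidiag n1 a"
      using that by (auto simp: antidiag_def)
    then have "card ((\<lambda>t. (t, a - 1 - t)) ` T) \<le> card (antidiag n1 a)"
      by (simp add: card_mono)
    then show ?thesis
      by (subst (asm) card_image[OF inj]) (simp add: hankel_w_eq_card_antidiag)
  qed
  show ?thesis
  proof (cases "a \<le> n1")
    case True
    then have "card {..<a} \<le> hankel_w n1 a" by (intro card_le) auto
    then show ?thesis using a_def by simp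
  next
    case False
    then have "card {a - n1..<n1} \<le> hankel_w n1 a" by (intro card_le) auto
    then show ?thesis using a_def assms by simp
  qed
qed

lemma inverse_hankel_w_le:
  assumes "j < n1" "l < n1"
  shows "1 / real (hankel_w n1 (j + l + 1)) \<le> 1 / real (j + 1) + 1 / real (n1 - j)"
proof -
  have "1 / real (hankel_w n1 (j + l + 1)) \<le> 1 / real (min (j + 1) (n1 - j))"
    using hankel_w_ge_min[OF assms] assms by (intro frac_le) auto
  also have "\<dots> \<le> 1 / real (j + 1) + 1 / real (n1 - j)"
    by (cases "j + 1 \<le> n1 - j") (auto simp: min_def)
  finally show ?thesis .
qed

lemma norm_sum_power2_le_card_mult:
  fixes f :: "'a \<Rightarrow> 'b::real_normed_vector"
  shows "(norm (\<Sum>x\<in>S. f x))\<^sup>2 \<le> real (card S) * (\<Sum>x\<in>S. (norm (f x))\<^sup>2)"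
proof -
  have "(norm (\<Sum>x\<in>S. f x))\<^sup>2 \<le> (\<Sum>x\<in>S. 1 * norm (f x))\<^sup>2"
    by (simp add: norm_sum power_mono)
  also have "\<dots> \<le> (\<Sum>x\<in>S. 1\<^sup>2) * (\<Sum>x\<in>S. (norm (f x))\<^sup>2)"
    by (rule Cauchy_Schwarz_ineq_sum)
  finally show ?thesis by simp
qed

lemma mat_inner_hankel_G:
  "mat_inner n1 Z (hankel_G n1 a)
     = complex_of_real (1 / sqrt (real (hankel_w n1 a))) * (\<Sum>(j,k)\<in>antidiag n1 a. Z j k)"
proof -
  have "mat_inner n1 Z (hankel_G n1 a)
      = (\<Sum>(j,k)\<in>{..<n1} \<times> {..<n1}. Z j k * cnj (hankel_G n1 a j k))"
    by (simp add: mat_inner_def sum.cartesian_product)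
  also have "\<dots> = (\<Sum>(j,k)\<in>antidiag n1 a.
                    Z j k * complex_of_real (1 / sqrt (real (hankel_w n1 a))))"
    by (rule sum.mono_neutral_cong_right) (auto simp: antidiag_def hankel_G_def split: if_splits)
  finally show ?thesis
    by (simp add: sum_distrib_left mult.commute case_prod_beta)
qed

lemma hankel_coeff_le_antidiag_sum:
  "1 / real (hankel_w n1 a) * (cmod (mat_inner n1 Z (hankel_G n1 a)))\<^sup>2
     \<le> (\<Sum>(j,k)\<in>antidiag n1 a. (cmod (Z j k))\<^sup>2) / real (hankel_w n1 a)"
proof -
  define w where "w = real (hankel_w n1 a)"
  define s where "s = (\<Sum>(j,k)\<in>antidiag n1 a. Z j k)"
  have cs: "(cmod s)\<^sup>2 \<le> w * (\<Sum>(j,k)\<in>antidiag n1 a. (cmod (Z j k))\<^sup>2)"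
    using norm_sum_power2_le_card_mult[of "\<lambda>(j,k). Z j k" "antidiag n1 a"]
    by (simp add: s_def w_def hankel_w_eq_card_antidiag case_prod_beta)
  have "(cmod (mat_inner n1 Z (hankel_G n1 a)))\<^sup>2 = (cmod s)\<^sup>2 / w"
    by (simp add: mat_inner_hankel_G s_def w_def norm_divide power_divide case_prod_beta)
  also have "\<dots> \<le> (\<Sum>(j,k)\<in>antidiag n1 a. (cmod (Z j k))\<^sup>2)"
    using cs by (cases "w = 0") (auto simp: divide_le_eq w_def mult.commute intro!: sum_nonneg)
  finally show ?thesis
    unfolding w_def[symmetric] by (simp add: divide_right_mono w_def)
qed

lemma sum_antidiags:
  assumes "n1 \<ge> 1"
  shows "(\<Sum>a=1..2*n1-1. \<Sum>p\<in>antidiag n1 a. F a p)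
           = (\<Sum>p\<in>{..<n1} \<times> {..<n1}. F (fst p + snd p + 1) p)"
proof -
  have "(\<Sum>a=1..2*n1-1. \<Sum>p\<in>antidiag n1 a. F a p)
      = (\<Sum>a=1..2*n1-1. \<Sum>p\<in>{..<n1} \<times> {..<n1}. if a = fst p + snd p + 1 then F a p else 0)"
    by (simp only: antidiag_eq_filter sum.inter_filter finite_SigmaI finite_lessThan)
  also have "\<dots> = (\<Sum>p\<in>{..<n1} \<times> {..<n1}. \<Sum>a=1..2*n1-1. if a = fst p + snd p + 1 then F a p else 0)"
    by (rule sum.swap)
  also have "\<dots> = (\<Sum>p\<in>{..<n1} \<times> {..<n1}. F (fst p + snd p + 1) p)"
    using assms by (intro sum.cong refl) auto
  finally show ?thesis .
qed

lemma hankel_energy_le_weighted_rows: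
  assumes "n1 \<ge> 1"
  shows "(\<Sum>a=1..2*n1-1. 1 / real (hankel_w n1 a) * (cmod (mat_inner n1 Z (hankel_G n1 a)))\<^sup>2)
     \<le> (\<Sum>j<n1. (1 / real (j + 1) + 1 / real (n1 - j)) * row_norm2 n1 Z j)"
proof -
  have "(\<Sum>a=1..2*n1-1. 1 / real (hankel_w n1 a) * (cmod (mat_inner n1 Z (hankel_G n1 a)))\<^sup>2)
      \<le> (\<Sum>a=1..2*n1-1. \<Sum>p\<in>antidiag n1 a. (cmod (Z (fst p) (snd p)))\<^sup>2 / real (hankel_w n1 a))"
    using hankel_coeff_le_antidiag_sum
    by (intro sum_mono) (simp add: sum_divide_distrib case_prod_beta)
  also have "\<dots> = (\<Sum>p\<in>{..<n1} \<times> {..<n1}.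
                    (cmod (Z (fst p) (snd p)))\<^sup>2 / real (hankel_w n1 (fst p + snd p + 1)))"
    using assms by (rule sum_antidiags)
  also have "\<dots> \<le> (\<Sum>p\<in>{..<n1} \<times> {..<n1}.
                    (1 / real (fst p + 1) + 1 / real (n1 - fst p)) * (cmod (Z (fst p) (snd p)))\<^sup>2)"
  proof (rule sum_mono)
    fix p assume "p \<in> {..<n1} \<times> {..<n1}"
    then have "1 / real (hankel_w n1 (fst p + snd p + 1)) \<le> 1 / real (fst p + 1) + 1 / real (n1 - fst p)"
      by (intro inverse_hankel_w_le) auto
    then show "(cmod (Z (fst p) (snd p)))\<^sup>2 / real (hankel_w n1 (fst p + snd p + 1))
        \<le> (1 / real (fst p + 1) + 1 / real (n1 - fst p)) * (cmod (Z (fst p) (snd p)))\<^sup>2"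
      using mult_right_mono by fastforce
  qed
  also have "\<dots> = (\<Sum>j<n1. (1 / real (j + 1) + 1 / real (n1 - j)) * row_norm2 n1 Z j)"
    by (auto simp: sum.cartesian_product row_norm2_def sum_distrib_left case_prod_beta of_nat_diff intro!: sum.cong)
  finally show ?thesis .
qed

lemma harm_le_one_plus_ln:
  assumes "m \<ge> 1"
  shows "harm m \<le> 1 + ln (real m)"
proof -
  obtain k where k: "m = Suc k" using assms by (cases m) auto
  have "harm (Suc k) - ln (Suc k) \<le> harm (Suc 0) - ln (Suc 0)"
    using decseq_harm_diff_ln unfolding decseq_def by blast
  then show ?thesis using k by (simp add: harm_Suc harm_def)
qed

lemma sum_row_weights: "(\<Sum>j<n1. 1 / real (j + 1) + 1 / real (n1 - j)) = 2 * harm n1"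
proof -
  have "(\<Sum>j<n1. 1 / real (n1 - j)) = (\<Sum>j<n1. 1 / real (j + 1))"
    by (subst sum.nat_diff_reindex[symmetric]) (auto intro!: sum.cong simp: Suc_diff_Suc)
  then show ?thesis by (simp add: sum.distrib harm_altdef inverse_eq_divide)
qed

lemma mean_hankel_energy_le_harm:
  assumes "n1 \<ge> 1"
    and row_bound: "\<forall>p<n1. (1 / real d) * (\<Sum>i<d. row_norm2 n1 (Z i) p) \<le> B"
  shows "(1 / real d) * (\<Sum>i<d. \<Sum>a=1..2*n1-1.
           1 / real (hankel_w n1 a) * (cmod (mat_inner n1 (Z i) (hankel_G n1 a)))\<^sup>2)
         \<le> 2 * B * harm n1"
proof -
  define h where "h j = 1 / real (j + 1) + 1 / real (n1 - j)" for j
  have "(1 / real d) * (\<Sum>i<d. \<Sum>a=1..2*n1-1.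
          1 / real (hankel_w n1 a) * (cmod (mat_inner n1 (Z i) (hankel_G n1 a)))\<^sup>2)
      \<le> (1 / real d) * (\<Sum>i<d. \<Sum>j<n1. h j * row_norm2 n1 (Z i) j)"
    using assms hankel_energy_le_weighted_rows unfolding h_def
    by (intro mult_left_mono sum_mono) auto
  also have "\<dots> = (\<Sum>j<n1. h j * ((1 / real d) * (\<Sum>i<d. row_norm2 n1 (Z i) j)))"
    by (subst sum.swap) (simp add: sum_distrib_left mult_ac)
  also have "\<dots> \<le> (\<Sum>j<n1. h j * B)"
    using row_bound by (intro sum_mono mult_left_mono) (auto simp: h_def)
  also have "\<dots> = 2 * B * harm n1"
    using sum_row_weights[of n1] by (simp add: h_def sum_distrib_left[symmetric] mult_ac)
  finally show ?thesis .
qed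

theorem lemmaC2:
  "\<exists>C>0. \<forall>(n::nat) (n1::nat) (d::nat) (Z::nat \<Rightarrow> nat \<Rightarrow> nat \<Rightarrow> complex) (B::real).
     n \<ge> 3 \<longrightarrow> odd n \<longrightarrow> n1 = (n + 1) div 2 \<longrightarrow> d \<ge> 1 \<longrightarrow>
     (\<forall>p<n1. (1 / real d) * (\<Sum>i<d. row_norm2 n1 (Z i) p) \<le> B) \<longrightarrow>
     (1 / real d) * (\<Sum>i<d. \<Sum>k=1..n.
         (1 / real (hankel_w n1 k)) * (cmod (mat_inner n1 (Z i) (hankel_G n1 k)))^2)
       \<le> C * B * ln (real n1)"
proof (intro exI[of _ 6] conjI allI impI)
  fix n n1 d :: nat and Z :: "nat \<Rightarrow> nat \<Rightarrow> nat \<Rightarrow> complex" and B :: real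
  assume "n \<ge> 3" "odd n" "n1 = (n + 1) div 2" "d \<ge> 1"
    and row_bound: "\<forall>p<n1. (1 / real d) * (\<Sum>i<d. row_norm2 n1 (Z i) p) \<le> B"
  then have n1: "n1 \<ge> 2" "n = 2*n1 - 1" by (auto elim!: oddE)
  have B_nonneg: "B \<ge> 0"
  proof -
    have "0 \<le> (1 / real d) * (\<Sum>i<d. row_norm2 n1 (Z i) 0)"
      unfolding row_norm2_def by (intro mult_nonneg_nonneg sum_nonneg) auto
    then show ?thesis using row_bound n1 by force
  qed
  have "ln (real n1) \<ge> 2/3"
    using ln_mono[of 2 "real n1"] n1 ln2_ge_two_thirds by linarith
  then have "2 * harm n1 \<le> 6 * ln (real n1)"
    using harm_le_one_plus_ln[of n1] n1 by linarith
  then have "B * (2 * harm n1) \<le> B * (6 * ln (real n1))"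
    using B_nonneg by (rule mult_left_mono)
  moreover have "(1 / real d) * (\<Sum>i<d. \<Sum>k=1..n.
          1 / real (hankel_w n1 k) * (cmod (mat_inner n1 (Z i) (hankel_G n1 k)))\<^sup>2)
      \<le> 2 * B * harm n1"
    using mean_hankel_energy_le_harm[OF _ row_bound] n1 by simp
  ultimately show "(1 / real d) * (\<Sum>i<d. \<Sum>k=1..n.
         (1 / real (hankel_w n1 k)) * (cmod (mat_inner n1 (Z i) (hankel_G n1 k)))^2)
       \<le> 6 * B * ln (real n1)" by (simp add: mult_ac)
qed simp

end
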